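(* Forward-safe and backward-safe pairs are closed under the following constructions: (1) if $(f_1,g_1)$ and $(f_2,g_2)$ are forward-safe (resp. backward-safe) then so is $(f_1\times f_2,g_1\times g_2)$; (2) if each $(f_i,g_i)$ is forward-safe (resp. backward-safe) then so is $(\coprod_i f_i,\coprod_i g_i)$; (3) if $f:X\to Y$, $g:Y\to W$ form a forward-safe (resp. backward-safe) pair then so does $(\mathcal V\times f,\ \theta_W\circ(\mathcal V\times g))$, where $\mathcal V\times f:\mathcal V\times X\to\mathcal V\times Y$ and $\theta_W\circ(\mathcal V\times g):\mathcal V\times Y\to[\mathcal V]W$.
   Context: Nominal sets over a countably infinite set $\mathcal V$ of names; $\theta_W:\mathcal V\times W\to[\mathcal V]W$, $(x,u)\mapsto\langle x\rangle u$, the quotient map onto the name-abstraction. For equivariant $f:X\to Y$: $u$ is $f$-safe if $|\mathsf{supp}(u)|=\max\{|\mathsf{supp}(v)|:v\in f^{-1}(f(u))\}$ (maximum existing); $f$ is safe if every element of $Y$ has an $f$-safe preimage. For safe maps $f:X\to Y$, $g:Y\to W$: $(f,g)$ is forward-safe if for every $(g\circ f)$-safe $u\in X$, $f(u)$ is $g$-safe; $(f,g)$ is backward-safe if every $u\in X$ which is $f$-safe and such that $f(u)$ is $g$-safe is $(g\circ f)$-safe. *)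

theory Defs
  imports Main
begin

text \<open>Names: the countably infinite set \<V> is modelled by the type nat.
  Finitely supported permutations of names act on nominal sets.\<close>

definition fperm :: "(nat \<Rightarrow> nat) \<Rightarrow> bool" where
  "fperm p \<longleftrightarrow> bij p \<and> finite {a. p a \<noteq> a}"

definition swp :: "nat \<Rightarrow> nat \<Rightarrow> nat \<Rightarrow> nat" where
  "swp a b = (\<lambda>x. if x = a then b else if x = b then a else x)"

record 'a nomset =
  carrier :: "'a set"
  act :: "(nat \<Rightarrow> nat) \<Rightarrow> 'a \<Rightarrow> 'a"

definition supports :: "'a nomset \<Rightarrow> nat set \<Rightarrow> 'a \<Rightarrow> bool" where
  "supports X A x \<longleftrightarrow> (\<forall>p. fperm p \<and> (\<forall>a\<in>A. p a = a) \<longrightarrow> act X p x = x)"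

definition supp :: "'a nomset \<Rightarrow> 'a \<Rightarrow> nat set" where
  "supp X x = \<Inter>{A. finite A \<and> supports X A x}"

definition nominal :: "'a nomset \<Rightarrow> bool" where
  "nominal X \<longleftrightarrow>
     (\<forall>x\<in>carrier X. act X id x = x) \<and>
     (\<forall>p q x. fperm p \<longrightarrow> fperm q \<longrightarrow> x \<in> carrier X \<longrightarrow> act X (p \<circ> q) x = act X p (act X q x)) \<and>
     (\<forall>p x. fperm p \<longrightarrow> x \<in> carrier X \<longrightarrow> act X p x \<in> carrier X) \<and>
     (\<forall>x\<in>carrier X. \<exists>A. finite A \<and> supports X A x)"

definition equivariant :: "'a nomset \<Rightarrow> 'b nomset \<Rightarrow> ('a \<Rightarrow> 'b) \<Rightarrow> bool" where
  "equivariant X Y f \<longleftrightarrow>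
     (\<forall>x\<in>carrier X. f x \<in> carrier Y) \<and>
     (\<forall>p x. fperm p \<longrightarrow> x \<in> carrier X \<longrightarrow> f (act X p x) = act Y p (f x))"

definition safe_elem :: "'a nomset \<Rightarrow> ('a \<Rightarrow> 'b) \<Rightarrow> 'a \<Rightarrow> bool" where
  "safe_elem X f u \<longleftrightarrow> u \<in> carrier X \<and>
     (\<forall>v\<in>carrier X. f v = f u \<longrightarrow> card (supp X v) \<le> card (supp X u))"

definition safe_map :: "'a nomset \<Rightarrow> 'b nomset \<Rightarrow> ('a \<Rightarrow> 'b) \<Rightarrow> bool" where
  "safe_map X Y f \<longleftrightarrow> (\<forall>y\<in>carrier Y. \<exists>u. safe_elem X f u \<and> f u = y)"

definition forward_safe ::
  "'a nomset \<Rightarrow> 'b nomset \<Rightarrow> 'c nomset \<Rightarrow> ('a \<Rightarrow> 'b) \<Rightarrow> ('b \<Rightarrow> 'c) \<Rightarrow> bool" where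
  "forward_safe X Y W f g \<longleftrightarrow> safe_map X Y f \<and> safe_map Y W g \<and>
     (\<forall>u. safe_elem X (g \<circ> f) u \<longrightarrow> safe_elem Y g (f u))"

definition backward_safe ::
  "'a nomset \<Rightarrow> 'b nomset \<Rightarrow> 'c nomset \<Rightarrow> ('a \<Rightarrow> 'b) \<Rightarrow> ('b \<Rightarrow> 'c) \<Rightarrow> bool" where
  "backward_safe X Y W f g \<longleftrightarrow> safe_map X Y f \<and> safe_map Y W g \<and>
     (\<forall>u. safe_elem X f u \<and> safe_elem Y g (f u) \<longrightarrow> safe_elem X (g \<circ> f) u)"

definition prod_nom :: "'a nomset \<Rightarrow> 'b nomset \<Rightarrow> ('a \<times> 'b) nomset" where
  "prod_nom X Y = \<lparr>carrier = carrier X \<times> carrier Y,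
                   act = (\<lambda>p (x, y). (act X p x, act Y p y))\<rparr>"

definition coprod_nom :: "'i set \<Rightarrow> ('i \<Rightarrow> 'a nomset) \<Rightarrow> ('i \<times> 'a) nomset" where
  "coprod_nom I X = \<lparr>carrier = Sigma I (\<lambda>i. carrier (X i)),
                     act = (\<lambda>p (i, x). (i, act (X i) p x))\<rparr>"

definition coprod_map :: "('i \<Rightarrow> 'a \<Rightarrow> 'b) \<Rightarrow> 'i \<times> 'a \<Rightarrow> 'i \<times> 'b" where
  "coprod_map f = (\<lambda>(i, x). (i, f i x))"

definition names_nom :: "nat nomset" where
  "names_nom = \<lparr>carrier = UNIV, act = (\<lambda>p a. p a)\<rparr>"

text \<open>Name abstraction: the class of (a,x) under alpha-equivalence
  (a,x) ~ (b,y) iff (a c).x = (b c).y for some c fresh for a,x,b,y.\<close>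
definition nabs :: "'a nomset \<Rightarrow> nat \<Rightarrow> 'a \<Rightarrow> (nat \<times> 'a) set" where
  "nabs W a x = {(b, y). y \<in> carrier W \<and>
     (\<exists>c. c \<noteq> a \<and> c \<noteq> b \<and> c \<notin> supp W x \<and> c \<notin> supp W y \<and>
          act W (swp a c) x = act W (swp b c) y)}"

definition abs_nom :: "'a nomset \<Rightarrow> (nat \<times> 'a) set nomset" where
  "abs_nom W = \<lparr>carrier = {nabs W a x | a x. x \<in> carrier W},
                act = (\<lambda>p S. (\<lambda>(b, y). (p b, act W p y)) ` S)\<rparr>"

definition theta :: "'a nomset \<Rightarrow> nat \<times> 'a \<Rightarrow> (nat \<times> 'a) set" where
  "theta W = (\<lambda>(a, x). nabs W a x)"

definition names_map :: "('a \<Rightarrow> 'b) \<Rightarrow> nat \<times> 'a \<Rightarrow> nat \<times> 'b" where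
  "names_map f = (\<lambda>(a, x). (a, f x))"

end

theory Submission
  imports Defs
begin

text \<open>An element \<open>(u1, u2)\<close> of a product is safe for \<open>h1 \<times> h2\<close> iff each \<open>ui\<close> is \<open>hi\<close>-safe and
  every name shared by \<open>u1\<close> and \<open>u2\<close> survives in both images. The tool behind this is renaming
  inside a fibre: a permutation fixing \<open>supp (h x)\<close> moves the other names of \<open>x\<close> away from any
  finite set without changing \<open>h x\<close> or the size of the support. Since
  \<open>supp (g (f u)) \<subseteq> supp (f u) \<subseteq> supp u\<close>, the shared-name condition for \<open>g \<circ> f\<close> is the conjunction
  of those for \<open>f\<close> and \<open>g\<close>, so forward and backward safety pass to products; for coproducts
  safety is simply componentwise. Finally \<open>\<V> \<times> f\<close> is the product of \<open>f\<close> with the identity on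
  names, and composing with \<open>\<theta>\<^sub>W\<close> does not change safety, because pairs with
  alpha-equivalent images differ by a permutation, which preserves support sizes.\<close>

lemma swp_swp [simp]: "swp a b (swp a b x) = x"
  by (simp add: swp_def)

lemma fperm_id: "fperm id"
  by (simp add: fperm_def)

lemma fperm_swp: "fperm (swp a b)"
proof -
  have "swp a b \<circ> swp a b = id" by (simp add: fun_eq_iff)
  then have "bij (swp a b)" using o_bij by blast
  moreover have "{x. swp a b x \<noteq> x} \<subseteq> {a, b}" by (auto simp: swp_def)
  then have "finite {x. swp a b x \<noteq> x}" by (rule finite_subset) simp
  ultimately show ?thesis by (simp add: fperm_def)
qed

lemma fperm_comp: "fperm p \<Longrightarrow> fperm q \<Longrightarrow> fperm (p \<circ> q)"
proof -
  assume p: "fperm p" and q: "fperm q"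
  have "{x. (p \<circ> q) x \<noteq> x} \<subseteq> {x. p x \<noteq> x} \<union> {x. q x \<noteq> x}" by auto
  then have "finite {x. (p \<circ> q) x \<noteq> x}" using p q by (auto simp: fperm_def intro: finite_subset)
  then show ?thesis using p q by (simp add: fperm_def bij_comp)
qed

lemma fperm_inv: "fperm p \<Longrightarrow> fperm (inv p)"
proof -
  assume p: "fperm p"
  then have b: "bij p" by (simp add: fperm_def)
  have "{x. inv p x \<noteq> x} \<subseteq> p ` {x. p x \<noteq> x}"
  proof
    fix x assume "x \<in> {x. inv p x \<noteq> x}"
    moreover have "p (inv p x) = x" using b by (simp add: bij_is_surj surj_f_inv_f)
    ultimately show "x \<in> p ` {x. p x \<noteq> x}" by (metis (mono_tags) image_eqI mem_Collect_eq)
  qed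
  then have "finite {x. inv p x \<noteq> x}" using p by (auto simp: fperm_def intro: finite_subset)
  then show ?thesis using b by (simp add: fperm_def bij_imp_bij_inv)
qed

lemma fperm_fixing_induct [consumes 2, case_names id swp]:
  assumes "fperm p" and "\<forall>a\<in>C. p a = a"
    and id: "P id"
    and swp: "\<And>a b q. a \<notin> C \<Longrightarrow> b \<notin> C \<Longrightarrow> fperm q \<Longrightarrow> \<forall>z\<in>C. q z = z \<Longrightarrow> P q \<Longrightarrow>
      P (swp a b \<circ> q)"
  shows "P p"
  using assms(1,2)
proof (induction "card {a. p a \<noteq> a}" arbitrary: p rule: less_induct)
  case less
  show ?case
  proof (cases "p = id")
    case True
    then show ?thesis using id by simp
  next
    case False
    then obtain a where pa: "p a \<noteq> a" by (auto simp: fun_eq_iff)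
    have inj: "inj p" and fin: "finite {z. p z \<noteq> z}"
      using less.prems(1) by (auto simp: fperm_def bij_is_inj)
    define q where "q = swp a (p a) \<circ> p"
    have aC: "a \<notin> C" using less.prems(2) pa by auto
    have paC: "p a \<notin> C"
    proof
      assume "p a \<in> C"
      then have "p (p a) = p a" using less.prems(2) by blast
      then show False using pa inj by (auto dest: injD)
    qed
    have "{z. q z \<noteq> z} \<subseteq> {z. p z \<noteq> z} - {a}"
    proof
      fix z assume qz: "z \<in> {z. q z \<noteq> z}"
      have "p z \<noteq> z"
      proof
        assume pz: "p z = z"
        have "z \<noteq> a" using pa pz by auto
        moreover have "z \<noteq> p a" using pz pa inj by (metis injD)
        ultimately show False using qz pz by (simp add: q_def swp_def)
      qed
      moreover have "z \<noteq> a" using qz pa by (auto simp: q_def swp_def)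
      ultimately show "z \<in> {z. p z \<noteq> z} - {a}" by blast
    qed
    then have "card {z. q z \<noteq> z} \<le> card ({z. p z \<noteq> z} - {a})"
      using fin by (intro card_mono) auto
    also have "\<dots> < card {z. p z \<noteq> z}"
      using fin pa by (intro card_Diff1_less) auto
    finally have "card {z. q z \<noteq> z} < card {z. p z \<noteq> z}" .
    moreover have fq: "fperm q" unfolding q_def using less.prems(1) fperm_swp fperm_comp by blast
    moreover have qC: "\<forall>z\<in>C. q z = z" using less.prems(2) aC paC by (auto simp: q_def swp_def)
    ultimately have "P q" using less.hyps by blast
    then have "P (swp a (p a) \<circ> q)" using swp[OF aC paC fq qC] by simp
    moreover have "swp a (p a) \<circ> q = p" by (simp add: q_def fun_eq_iff)
    ultimately show ?thesis by simp
  qed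
qed

lemma nominal_act_id: "nominal X \<Longrightarrow> x \<in> carrier X \<Longrightarrow> act X id x = x"
  by (simp add: nominal_def)

lemma nominal_act_comp:
  "nominal X \<Longrightarrow> fperm p \<Longrightarrow> fperm q \<Longrightarrow> x \<in> carrier X \<Longrightarrow> act X (p \<circ> q) x = act X p (act X q x)"
  by (simp add: nominal_def)

lemma nominal_act_closed: "nominal X \<Longrightarrow> fperm p \<Longrightarrow> x \<in> carrier X \<Longrightarrow> act X p x \<in> carrier X"
  by (simp add: nominal_def)

lemma nominal_act_inv_act:
  assumes "nominal X" "fperm p" "x \<in> carrier X"
  shows "act X (inv p) (act X p x) = x"
proof -
  have "inv p \<circ> p = id" using assms(2) by (simp add: fperm_def bij_is_inj)
  then show ?thesis
    using nominal_act_comp[OF assms(1) fperm_inv[OF assms(2)] assms(2,3)] nominal_act_id[OF assms(1,3)]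
    by simp
qed

lemma nominal_act_swp_swp:
  assumes "nominal X" "x \<in> carrier X"
  shows "act X (swp a b) (act X (swp a b) x) = x"
proof -
  have "swp a b \<circ> swp a b = id" by (simp add: fun_eq_iff)
  then show ?thesis
    using nominal_act_comp[OF assms(1) fperm_swp[of a b] fperm_swp[of a b] assms(2)] nominal_act_id[OF assms]
    by simp
qed

lemma equivariantD:
  "equivariant X Y f \<Longrightarrow> x \<in> carrier X \<Longrightarrow> f x \<in> carrier Y"
  "equivariant X Y f \<Longrightarrow> fperm p \<Longrightarrow> x \<in> carrier X \<Longrightarrow> f (act X p x) = act Y p (f x)"
  by (simp_all add: equivariant_def)

lemma equivariant_id: "equivariant X X id"
  by (simp add: equivariant_def)

lemma equivariant_comp: "equivariant X Y f \<Longrightarrow> equivariant Y W g \<Longrightarrow> equivariant X W (g \<circ> f)"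
  by (simp add: equivariant_def)

subsection \<open>Support\<close>

lemma supports_swp_fixes: "supports X A x \<Longrightarrow> a \<notin> A \<Longrightarrow> b \<notin> A \<Longrightarrow> act X (swp a b) x = x"
  unfolding supports_def using fperm_swp[of a b] by (auto simp: swp_def)

lemma supports_if_swaps_fix:
  assumes X: "nominal X" and x: "x \<in> carrier X"
    and swaps: "\<And>a b. a \<notin> C \<Longrightarrow> b \<notin> C \<Longrightarrow> act X (swp a b) x = x"
  shows "supports X C x"
  unfolding supports_def
proof (intro allI impI, elim conjE)
  fix p assume "fperm p" "\<forall>a\<in>C. p a = a"
  then show "act X p x = x"
  proof (induction p rule: fperm_fixing_induct)
    case id
    show ?case using nominal_act_id[OF X x] .
  next
    case (swp a b q)
    then show ?case using nominal_act_comp[OF X fperm_swp swp.hyps(3) x] swaps by presburger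
  qed
qed

lemma supports_Int:
  assumes X: "nominal X" and x: "x \<in> carrier X" and "finite A" "finite B"
    and A: "supports X A x" and B: "supports X B x"
  shows "supports X (A \<inter> B) x"
proof (rule supports_if_swaps_fix[OF X x])
  fix a b assume a: "a \<notin> A \<inter> B" and b: "b \<notin> A \<inter> B"
  show "act X (swp a b) x = x"
  proof (cases "a = b")
    case True
    then have "swp a b = id" by (simp add: swp_def fun_eq_iff)
    then show ?thesis using nominal_act_id[OF X x] by simp
  next
    case False
    obtain c where c: "c \<notin> A \<union> B \<union> {a, b}"
      using ex_new_if_finite[OF infinite_UNIV_nat, of "A \<union> B \<union> {a, b}"] \<open>finite A\<close> \<open>finite B\<close>
      by auto
    text \<open>Each of the swaps \<open>(a c)\<close>, \<open>(b c)\<close> moves only names outside \<open>A\<close> or only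
      names outside \<open>B\<close>.\<close>
    have ac: "act X (swp a c) x = x" and bc: "act X (swp b c) x = x"
      using a b c supports_swp_fixes[OF A] supports_swp_fixes[OF B] by auto
    have "swp a b = swp a c \<circ> (swp b c \<circ> swp a c)"
      using False c by (auto simp: swp_def fun_eq_iff)
    then show ?thesis
      using nominal_act_comp[OF X fperm_swp fperm_comp[OF fperm_swp fperm_swp] x]
        nominal_act_comp[OF X fperm_swp fperm_swp x] ac bc by simp
  qed
qed

lemma supp_least: "finite A \<Longrightarrow> supports X A x \<Longrightarrow> supp X x \<subseteq> A"
  unfolding supp_def by blast

lemma finite_supp_supports:
  assumes X: "nominal X" and x: "x \<in> carrier X"
  shows "finite (supp X x) \<and> supports X (supp X x) x"
proof -
  let ?F = "{A. finite A \<and> supports X A x}"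
  obtain A0 where "A0 \<in> ?F" using X x unfolding nominal_def by blast
  then obtain A where A: "A \<in> ?F" and min: "\<And>B. B \<in> ?F \<Longrightarrow> card A \<le> card B"
    using ex_has_least_nat[of "\<lambda>A. A \<in> ?F" A0 card] by auto
  have least: "A \<subseteq> B" if B: "B \<in> ?F" for B
  proof -
    have fin: "finite A" using A by simp
    have "A \<inter> B \<in> ?F" using A B supports_Int[OF X x] by auto
    then have "card A \<le> card (A \<inter> B)" by (rule min)
    moreover have "card (A \<inter> B) \<le> card A" using fin by (intro card_mono) auto
    ultimately have "A \<inter> B = A" using card_subset_eq[OF fin, of "A \<inter> B"] by simp
    then show ?thesis by blast
  qed
  have "supp X x \<subseteq> A" unfolding supp_def using A by (rule Inter_lower)
  moreover have "A \<subseteq> supp X x" unfolding supp_def using least by (rule Inter_greatest)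
  ultimately have "supp X x = A" by (rule antisym)
  then show ?thesis using A by simp
qed

lemma finite_supp: "nominal X \<Longrightarrow> x \<in> carrier X \<Longrightarrow> finite (supp X x)"
  by (rule conjunct1[OF finite_supp_supports])

lemma supports_supp: "nominal X \<Longrightarrow> x \<in> carrier X \<Longrightarrow> supports X (supp X x) x"
  by (rule conjunct2[OF finite_supp_supports])

lemma supp_equivariant_subset:
  assumes X: "nominal X" and f: "equivariant X Y f" and x: "x \<in> carrier X"
  shows "supp Y (f x) \<subseteq> supp X x"
proof (rule supp_least[OF finite_supp[OF X x]])
  show "supports Y (supp X x) (f x)"
    using supports_supp[OF X x] equivariantD(2)[OF f _ x] unfolding supports_def by metis
qed

lemma supp_act_subset:
  assumes X: "nominal X" and p: "fperm p" and x: "x \<in> carrier X"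
  shows "supp X (act X p x) \<subseteq> p ` supp X x"
proof (rule supp_least)
  show "finite (p ` supp X x)" using finite_supp[OF X x] by simp
  show "supports X (p ` supp X x) (act X p x)" unfolding supports_def
  proof (intro allI impI, elim conjE)
    fix q assume q: "fperm q" and fix_q: "\<forall>a\<in>p ` supp X x. q a = a"
    have bij: "bij p" using p by (simp add: fperm_def)
    define r where "r = inv p \<circ> q \<circ> p"
    have r: "fperm r" unfolding r_def using fperm_comp fperm_inv p q by blast
    have "\<forall>a\<in>supp X x. r a = a" using fix_q bij by (simp add: r_def bij_is_inj)
    then have rx: "act X r x = x" using supports_supp[OF X x] r unfolding supports_def by blast
    have "q \<circ> p = p \<circ> r" unfolding r_def using bij by (simp add: fun_eq_iff bij_is_surj surj_f_inv_f)
    then show "act X q (act X p x) = act X p x"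
      using nominal_act_comp[OF X q p x] nominal_act_comp[OF X p r x] rx by simp
  qed
qed

lemma card_supp_act:
  assumes X: "nominal X" and p: "fperm p" and x: "x \<in> carrier X"
  shows "card (supp X (act X p x)) = card (supp X x)"
proof (rule antisym)
  have "card (supp X (act X q y)) \<le> card (supp X y)"
    if q: "fperm q" and y: "y \<in> carrier X" for q y
    using card_mono[OF finite_imageI[OF finite_supp[OF X y]] supp_act_subset[OF X q y]]
      card_image_le[OF finite_supp[OF X y], of q] by linarith
  from this[OF p x] this[OF fperm_inv[OF p] nominal_act_closed[OF X p x]]
  show "card (supp X (act X p x)) \<le> card (supp X x)"
    and "card (supp X x) \<le> card (supp X (act X p x))"
    by (simp_all add: nominal_act_inv_act[OF X p x])
qed

lemma exists_fperm_fixing_avoiding: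
  assumes "finite E" "finite F" "finite S" "E \<inter> S = {}"
  shows "\<exists>\<pi>. fperm \<pi> \<and> (\<forall>s\<in>S. \<pi> s = s) \<and> \<pi> ` E \<inter> F = {}"
  using assms(1,4)
proof (induction E rule: finite_induct)
  case empty
  show ?case using fperm_id by auto
next
  case (insert e E)
  then obtain \<pi> where \<pi>: "fperm \<pi>" and fix_S: "\<forall>s\<in>S. \<pi> s = s" and avoid: "\<pi> ` E \<inter> F = {}"
    by blast
  have inj: "inj \<pi>" using \<pi> by (simp add: fperm_def bij_is_inj)
  obtain c where c: "c \<notin> F \<union> S \<union> \<pi> ` E \<union> {\<pi> e}"
    using ex_new_if_finite[OF infinite_UNIV_nat] assms(2,3) insert.hyps(1)
    by (metis finite_Un finite_imageI finite.emptyI finite_insert)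
  define \<pi>' where "\<pi>' = swp (\<pi> e) c \<circ> \<pi>"
  have "fperm \<pi>'" unfolding \<pi>'_def using fperm_comp[OF fperm_swp \<pi>] .
  moreover have "\<pi>' s = s" if s: "s \<in> S" for s
  proof -
    have "s \<noteq> e" using s insert.prems by auto
    then have "s \<noteq> \<pi> e" using fix_S s inj by (metis injD)
    then show ?thesis using s fix_S c by (auto simp: \<pi>'_def swp_def)
  qed
  moreover have "\<pi>' y = \<pi> y" if y: "y \<in> E" for y
  proof -
    have "\<pi> y \<noteq> \<pi> e" using inj y insert.hyps(2) by (auto dest: injD)
    moreover have "\<pi> y \<noteq> c" using c y by auto
    ultimately show ?thesis by (simp add: \<pi>'_def swp_def)
  qed
  then have "\<pi>' ` insert e E \<inter> F = {}"
    using c avoid by (auto simp: \<pi>'_def swp_def)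
  ultimately show ?case by blast
qed

lemma fibre_rename_avoiding:
  assumes X: "nominal X" and Y: "nominal Y" and h: "equivariant X Y h"
    and x: "x \<in> carrier X" and F: "finite F"
  obtains x' where "x' \<in> carrier X" "h x' = h x" "card (supp X x') = card (supp X x)"
    "supp X x' \<inter> F \<subseteq> supp Y (h x)"
proof -
  let ?S = "supp Y (h x)"
  have hx: "h x \<in> carrier Y" using equivariantD(1)[OF h x] .
  obtain \<pi> where \<pi>: "fperm \<pi>" and fix_S: "\<forall>s\<in>?S. \<pi> s = s"
    and avoid: "\<pi> ` (supp X x - ?S) \<inter> F = {}"
    using exists_fperm_fixing_avoiding[of "supp X x - ?S" F ?S] finite_supp[OF X x]
      finite_supp[OF Y hx] F by auto
  define x' where "x' = act X \<pi> x"
  have "h x' = act Y \<pi> (h x)" using equivariantD(2)[OF h \<pi> x] x'_def by simp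
  also have "\<dots> = h x" using supports_supp[OF Y hx] \<pi> fix_S unfolding supports_def by blast
  finally have "h x' = h x" .
  moreover have "supp X x' \<inter> F \<subseteq> ?S"
    using supp_act_subset[OF X \<pi> x] fix_S avoid unfolding x'_def by fastforce
  ultimately show ?thesis
    using that nominal_act_closed[OF X \<pi> x] card_supp_act[OF X \<pi> x] unfolding x'_def by blast
qed

lemma carrier_prod_nom [simp]: "carrier (prod_nom X Y) = carrier X \<times> carrier Y"
  by (simp add: prod_nom_def)

lemma act_prod_nom [simp]: "act (prod_nom X Y) p (x, y) = (act X p x, act Y p y)"
  by (simp add: prod_nom_def)

lemma supports_prod_nom: "supports (prod_nom X Y) A (x, y) \<longleftrightarrow> supports X A x \<and> supports Y A y"
  unfolding supports_def by auto

lemma supports_mono: "supports X A x \<Longrightarrow> A \<subseteq> B \<Longrightarrow> supports X B x"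
  unfolding supports_def by blast

lemma supp_prod_nom:
  assumes "nominal X" "nominal Y" "x \<in> carrier X" "y \<in> carrier Y"
  shows "supp (prod_nom X Y) (x, y) = supp X x \<union> supp Y y"
proof
  show "supp (prod_nom X Y) (x, y) \<subseteq> supp X x \<union> supp Y y"
  proof (rule supp_least)
    show "finite (supp X x \<union> supp Y y)"
      using finite_supp[OF assms(1,3)] finite_supp[OF assms(2,4)] by simp
    show "supports (prod_nom X Y) (supp X x \<union> supp Y y) (x, y)"
      using supports_mono[OF supports_supp[OF assms(1,3)]] supports_mono[OF supports_supp[OF assms(2,4)]]
      unfolding supports_prod_nom by blast
  qed
  show "supp X x \<union> supp Y y \<subseteq> supp (prod_nom X Y) (x, y)"
    unfolding supp_def by (auto simp: supports_prod_nom)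
qed

lemma nominal_prod_nom: "nominal X \<Longrightarrow> nominal Y \<Longrightarrow> nominal (prod_nom X Y)"
  unfolding nominal_def
  by (auto simp: supports_prod_nom intro: supports_mono) (meson finite_UnI sup_ge1 sup_ge2 supports_mono)

lemma safe_elemD: "safe_elem X h u \<Longrightarrow> v \<in> carrier X \<Longrightarrow> h v = h u \<Longrightarrow> card (supp X v) \<le> card (supp X u)"
  unfolding safe_elem_def by simp

lemma safe_elem_fibre_rename:
  "safe_elem X h u \<Longrightarrow> u' \<in> carrier X \<Longrightarrow> h u' = h u \<Longrightarrow> card (supp X u') = card (supp X u) \<Longrightarrow>
   safe_elem X h u'"
  unfolding safe_elem_def by simp

lemma safe_elem_of_comp: "safe_elem X (k \<circ> h) u \<Longrightarrow> safe_elem X h u"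
  unfolding safe_elem_def by simp

lemma safe_elem_id: "safe_elem X id u \<longleftrightarrow> u \<in> carrier X"
  unfolding safe_elem_def by simp

lemma safe_map_id: "safe_map X X id"
  unfolding safe_map_def safe_elem_id by simp

lemma forward_safe_id: "forward_safe X X X id id"
  unfolding forward_safe_def by (simp add: safe_map_id safe_elem_id)

lemma backward_safe_id: "backward_safe X X X id id"
  unfolding backward_safe_def by (simp add: safe_map_id safe_elem_id)

subsection \<open>Safety of product maps\<close>

lemma card_supp_le_if_card_supp_Un_max:
  assumes X: "nominal X" and Z: "nominal Z" and h: "equivariant X Z h" and B: "finite B"
    and u: "u \<in> carrier X"
    and max: "\<And>v. v \<in> carrier X \<Longrightarrow> h v = h u \<Longrightarrow> card (supp X v \<union> B) \<le> card (supp X u \<union> B)"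
    and v: "v \<in> carrier X" and hv: "h v = h u"
  shows "card (supp X v) + card (supp X u \<inter> B) \<le> card (supp X u) + card (supp Z (h u) \<inter> B)"
proof -
  obtain v' where v': "v' \<in> carrier X" "h v' = h v" "card (supp X v') = card (supp X v)"
    "supp X v' \<inter> B \<subseteq> supp Z (h v)"
    using fibre_rename_avoiding[OF X Z h v B] .
  have "card (supp X v' \<inter> B) \<le> card (supp Z (h u) \<inter> B)"
    using v'(4) hv B by (intro card_mono) auto
  moreover have "card (supp X v' \<union> B) \<le> card (supp X u \<union> B)" using max v' hv by simp
  moreover have "card (supp X v') + card B = card (supp X v' \<union> B) + card (supp X v' \<inter> B)"
    using card_Un_Int[OF finite_supp[OF X v'(1)] B] .
  moreover have "card (supp X u) + card B = card (supp X u \<union> B) + card (supp X u \<inter> B)"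
    using card_Un_Int[OF finite_supp[OF X u] B] .
  ultimately show ?thesis using v'(3) by linarith
qed

lemma safe_elem_if_card_supp_Un_max:
  assumes X: "nominal X" and Z: "nominal Z" and h: "equivariant X Z h" and B: "finite B"
    and u: "u \<in> carrier X"
    and max: "\<And>v. v \<in> carrier X \<Longrightarrow> h v = h u \<Longrightarrow> card (supp X v \<union> B) \<le> card (supp X u \<union> B)"
  shows "safe_elem X h u \<and> supp X u \<inter> B \<subseteq> supp Z (h u)"
proof
  have key: "card (supp X v) + card (supp X u \<inter> B) \<le> card (supp X u) + card (supp Z (h u) \<inter> B)"
    if "v \<in> carrier X" "h v = h u" for v
    using card_supp_le_if_card_supp_Un_max[OF X Z h B u max that] .
  have fin: "finite (supp X u \<inter> B)" using B by simp
  have sub: "supp Z (h u) \<inter> B \<subseteq> supp X u \<inter> B" using supp_equivariant_subset[OF X h u] by blast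
  have le: "card (supp Z (h u) \<inter> B) \<le> card (supp X u \<inter> B)" using card_mono[OF fin sub] .
  show "safe_elem X h u" unfolding safe_elem_def
  proof (intro conjI ballI impI u)
    fix v assume "v \<in> carrier X" "h v = h u"
    from key[OF this] le show "card (supp X v) \<le> card (supp X u)" by linarith
  qed
  have "card (supp X u \<inter> B) \<le> card (supp Z (h u) \<inter> B)" using key[OF u refl] by linarith
  then have "card (supp Z (h u) \<inter> B) = card (supp X u \<inter> B)" using le by linarith
  then have "supp Z (h u) \<inter> B = supp X u \<inter> B" by (rule card_subset_eq[OF fin sub])
  then show "supp X u \<inter> B \<subseteq> supp Z (h u)" by blast
qed

lemma safe_elem_map_prod_iff:
  assumes X1: "nominal X1" and X2: "nominal X2" and Z1: "nominal Z1" and Z2: "nominal Z2"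
    and h1: "equivariant X1 Z1 h1" and h2: "equivariant X2 Z2 h2"
  shows "safe_elem (prod_nom X1 X2) (map_prod h1 h2) (u1, u2) \<longleftrightarrow>
    safe_elem X1 h1 u1 \<and> safe_elem X2 h2 u2 \<and>
    supp X1 u1 \<inter> supp X2 u2 \<subseteq> supp Z1 (h1 u1) \<inter> supp Z2 (h2 u2)"
proof
  assume safe: "safe_elem (prod_nom X1 X2) (map_prod h1 h2) (u1, u2)"
  then have u1: "u1 \<in> carrier X1" and u2: "u2 \<in> carrier X2" by (auto simp: safe_elem_def)
  have max: "card (supp X1 v1 \<union> supp X2 v2) \<le> card (supp X1 u1 \<union> supp X2 u2)"
    if "v1 \<in> carrier X1" "v2 \<in> carrier X2" "h1 v1 = h1 u1" "h2 v2 = h2 u2" for v1 v2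
    using safe_elemD[OF safe, of "(v1, v2)"] that
    by (simp add: supp_prod_nom[OF X1 X2] u1 u2)
  have "safe_elem X1 h1 u1 \<and> supp X1 u1 \<inter> supp X2 u2 \<subseteq> supp Z1 (h1 u1)"
    using safe_elem_if_card_supp_Un_max[OF X1 Z1 h1 finite_supp[OF X2 u2] u1] max u2 by blast
  moreover have "safe_elem X2 h2 u2 \<and> supp X2 u2 \<inter> supp X1 u1 \<subseteq> supp Z2 (h2 u2)"
    using safe_elem_if_card_supp_Un_max[OF X2 Z2 h2 finite_supp[OF X1 u1] u2] max[OF u1]
    by (simp add: Un_commute)
  ultimately show "safe_elem X1 h1 u1 \<and> safe_elem X2 h2 u2 \<and>
    supp X1 u1 \<inter> supp X2 u2 \<subseteq> supp Z1 (h1 u1) \<inter> supp Z2 (h2 u2)" by blast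
next
  assume safe: "safe_elem X1 h1 u1 \<and> safe_elem X2 h2 u2 \<and>
    supp X1 u1 \<inter> supp X2 u2 \<subseteq> supp Z1 (h1 u1) \<inter> supp Z2 (h2 u2)"
  then have u1: "u1 \<in> carrier X1" and u2: "u2 \<in> carrier X2" by (auto simp: safe_elem_def)
  show "safe_elem (prod_nom X1 X2) (map_prod h1 h2) (u1, u2)"
    unfolding safe_elem_def
  proof (intro conjI ballI impI)
    show "(u1, u2) \<in> carrier (prod_nom X1 X2)" using u1 u2 by simp
  next
    fix w assume w: "w \<in> carrier (prod_nom X1 X2)" and hw: "map_prod h1 h2 w = map_prod h1 h2 (u1, u2)"
    obtain v1 v2 where w_def: "w = (v1, v2)" by (cases w)
    have v1: "v1 \<in> carrier X1" and v2: "v2 \<in> carrier X2" using w w_def by auto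
    have hv1: "h1 v1 = h1 u1" and hv2: "h2 v2 = h2 u2" using hw w_def by auto
    have "card (supp X1 v1) \<le> card (supp X1 u1)" "card (supp X2 v2) \<le> card (supp X2 u2)"
      using safe v1 v2 hv1 hv2 by (auto dest: safe_elemD)
    moreover have "supp X1 u1 \<inter> supp X2 u2 \<subseteq> supp X1 v1 \<inter> supp X2 v2"
      using safe hv1 hv2 supp_equivariant_subset[OF X1 h1 v1] supp_equivariant_subset[OF X2 h2 v2]
      by auto
    then have "card (supp X1 u1 \<inter> supp X2 u2) \<le> card (supp X1 v1 \<inter> supp X2 v2)"
      using finite_supp[OF X1 v1] by (intro card_mono) auto
    moreover note card_Un_Int[OF finite_supp[OF X1 v1] finite_supp[OF X2 v2]]
      card_Un_Int[OF finite_supp[OF X1 u1] finite_supp[OF X2 u2]]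
    ultimately show "card (supp (prod_nom X1 X2) w) \<le> card (supp (prod_nom X1 X2) (u1, u2))"
      using w_def supp_prod_nom[OF X1 X2 v1 v2] supp_prod_nom[OF X1 X2 u1 u2] by simp
  qed
qed

lemma safe_map_map_prod:
  assumes X1: "nominal X1" and X2: "nominal X2" and Z1: "nominal Z1" and Z2: "nominal Z2"
    and h1: "equivariant X1 Z1 h1" and h2: "equivariant X2 Z2 h2"
    and safe1: "safe_map X1 Z1 h1" and safe2: "safe_map X2 Z2 h2"
  shows "safe_map (prod_nom X1 X2) (prod_nom Z1 Z2) (map_prod h1 h2)"
  unfolding safe_map_def
proof
  fix z assume "z \<in> carrier (prod_nom Z1 Z2)"
  then obtain z1 z2 where z: "z = (z1, z2)" "z1 \<in> carrier Z1" "z2 \<in> carrier Z2" by auto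
  obtain u1 where u1: "safe_elem X1 h1 u1" "h1 u1 = z1" using safe1 z(2) unfolding safe_map_def by blast
  obtain u2 where u2: "safe_elem X2 h2 u2" "h2 u2 = z2" using safe2 z(3) unfolding safe_map_def by blast
  have cu1: "u1 \<in> carrier X1" and cu2: "u2 \<in> carrier X2" using u1 u2 by (auto simp: safe_elem_def)
  text \<open>Rename \<open>u1\<close> away from \<open>supp u2\<close>, then \<open>u2\<close> away from the new \<open>supp u1\<close>.\<close>
  obtain u1' where u1': "u1' \<in> carrier X1" "h1 u1' = h1 u1" "card (supp X1 u1') = card (supp X1 u1)"
    "supp X1 u1' \<inter> supp X2 u2 \<subseteq> supp Z1 (h1 u1)"
    using fibre_rename_avoiding[OF X1 Z1 h1 cu1 finite_supp[OF X2 cu2]] .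
  obtain u2' where u2': "u2' \<in> carrier X2" "h2 u2' = h2 u2" "card (supp X2 u2') = card (supp X2 u2)"
    "supp X2 u2' \<inter> supp X1 u1' \<subseteq> supp Z2 (h2 u2)"
    using fibre_rename_avoiding[OF X2 Z2 h2 cu2 finite_supp[OF X1 u1'(1)]] .
  have "supp X1 u1' \<inter> supp X2 u2' \<subseteq> supp Z1 (h1 u1') \<inter> supp Z2 (h2 u2')"
    using u1'(2,4) u2'(2,4) supp_equivariant_subset[OF X2 h2 cu2] by auto
  then have "safe_elem (prod_nom X1 X2) (map_prod h1 h2) (u1', u2')"
    using safe_elem_map_prod_iff[OF X1 X2 Z1 Z2 h1 h2]
      safe_elem_fibre_rename[OF u1(1) u1'(1-3)] safe_elem_fibre_rename[OF u2(1) u2'(1-3)] by blast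
  moreover have "map_prod h1 h2 (u1', u2') = z" using z u1 u2 u1' u2' by simp
  ultimately show "\<exists>u. safe_elem (prod_nom X1 X2) (map_prod h1 h2) u \<and> map_prod h1 h2 u = z" by blast
qed

lemma forward_safe_prod_nom:
  assumes X1: "nominal X1" and Y1: "nominal Y1" and W1: "nominal W1"
    and X2: "nominal X2" and Y2: "nominal Y2" and W2: "nominal W2"
    and f1: "equivariant X1 Y1 f1" and g1: "equivariant Y1 W1 g1"
    and f2: "equivariant X2 Y2 f2" and g2: "equivariant Y2 W2 g2"
    and fs1: "forward_safe X1 Y1 W1 f1 g1" and fs2: "forward_safe X2 Y2 W2 f2 g2"
  shows "forward_safe (prod_nom X1 X2) (prod_nom Y1 Y2) (prod_nom W1 W2)
    (map_prod f1 f2) (map_prod g1 g2)"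
  unfolding forward_safe_def map_prod.comp
proof (intro conjI allI impI)
  show "safe_map (prod_nom X1 X2) (prod_nom Y1 Y2) (map_prod f1 f2)"
    and "safe_map (prod_nom Y1 Y2) (prod_nom W1 W2) (map_prod g1 g2)"
    using safe_map_map_prod[OF X1 X2 Y1 Y2 f1 f2] safe_map_map_prod[OF Y1 Y2 W1 W2 g1 g2] fs1 fs2
    by (simp_all add: forward_safe_def)
next
  fix u assume safe: "safe_elem (prod_nom X1 X2) (map_prod (g1 \<circ> f1) (g2 \<circ> f2)) u"
  obtain x y where u: "u = (x, y)" by (cases u)
  have sx: "safe_elem X1 (g1 \<circ> f1) x" and sy: "safe_elem X2 (g2 \<circ> f2) y"
    and shared: "supp X1 x \<inter> supp X2 y \<subseteq> supp W1 (g1 (f1 x)) \<inter> supp W2 (g2 (f2 y))"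
    using safe unfolding u
    by (simp_all add: safe_elem_map_prod_iff[OF X1 X2 W1 W2 equivariant_comp[OF f1 g1]
      equivariant_comp[OF f2 g2]])
  have "x \<in> carrier X1" "y \<in> carrier X2" using sx sy by (simp_all add: safe_elem_def)
  then have "supp Y1 (f1 x) \<inter> supp Y2 (f2 y) \<subseteq> supp W1 (g1 (f1 x)) \<inter> supp W2 (g2 (f2 y))"
    using shared supp_equivariant_subset[OF X1 f1] supp_equivariant_subset[OF X2 f2] by blast
  then show "safe_elem (prod_nom Y1 Y2) (map_prod g1 g2) (map_prod f1 f2 u)"
    using fs1 fs2 sx sy unfolding u
    by (simp add: forward_safe_def safe_elem_map_prod_iff[OF Y1 Y2 W1 W2 g1 g2])
qed

lemma backward_safe_prod_nom:
  assumes X1: "nominal X1" and Y1: "nominal Y1" and W1: "nominal W1"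
    and X2: "nominal X2" and Y2: "nominal Y2" and W2: "nominal W2"
    and f1: "equivariant X1 Y1 f1" and g1: "equivariant Y1 W1 g1"
    and f2: "equivariant X2 Y2 f2" and g2: "equivariant Y2 W2 g2"
    and bs1: "backward_safe X1 Y1 W1 f1 g1" and bs2: "backward_safe X2 Y2 W2 f2 g2"
  shows "backward_safe (prod_nom X1 X2) (prod_nom Y1 Y2) (prod_nom W1 W2)
    (map_prod f1 f2) (map_prod g1 g2)"
  unfolding backward_safe_def map_prod.comp
proof (intro conjI allI impI)
  show "safe_map (prod_nom X1 X2) (prod_nom Y1 Y2) (map_prod f1 f2)"
    and "safe_map (prod_nom Y1 Y2) (prod_nom W1 W2) (map_prod g1 g2)"
    using safe_map_map_prod[OF X1 X2 Y1 Y2 f1 f2] safe_map_map_prod[OF Y1 Y2 W1 W2 g1 g2] bs1 bs2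
    by (simp_all add: backward_safe_def)
next
  fix u assume safe: "safe_elem (prod_nom X1 X2) (map_prod f1 f2) u \<and>
    safe_elem (prod_nom Y1 Y2) (map_prod g1 g2) (map_prod f1 f2 u)"
  obtain x y where u: "u = (x, y)" by (cases u)
  have "safe_elem X1 f1 x" "safe_elem X2 f2 y"
    and "supp X1 x \<inter> supp X2 y \<subseteq> supp Y1 (f1 x) \<inter> supp Y2 (f2 y)"
    and "safe_elem Y1 g1 (f1 x)" "safe_elem Y2 g2 (f2 y)"
    and "supp Y1 (f1 x) \<inter> supp Y2 (f2 y) \<subseteq> supp W1 (g1 (f1 x)) \<inter> supp W2 (g2 (f2 y))"
    using safe unfolding u
    by (simp_all add: safe_elem_map_prod_iff[OF X1 X2 Y1 Y2 f1 f2]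
      safe_elem_map_prod_iff[OF Y1 Y2 W1 W2 g1 g2])
  then show "safe_elem (prod_nom X1 X2) (map_prod (g1 \<circ> f1) (g2 \<circ> f2)) u"
    using bs1 bs2 unfolding u
    by (auto simp: backward_safe_def safe_elem_map_prod_iff[OF X1 X2 W1 W2
      equivariant_comp[OF f1 g1] equivariant_comp[OF f2 g2]])
qed

subsection \<open>Coproducts\<close>

lemma carrier_coprod_nom [simp]: "carrier (coprod_nom I X) = Sigma I (\<lambda>i. carrier (X i))"
  by (simp add: coprod_nom_def)

lemma act_coprod_nom [simp]: "act (coprod_nom I X) p (i, x) = (i, act (X i) p x)"
  by (simp add: coprod_nom_def)

lemma coprod_map_apply [simp]: "coprod_map f (i, x) = (i, f i x)"
  by (simp add: coprod_map_def)

lemma coprod_map_comp: "coprod_map g \<circ> coprod_map f = coprod_map (\<lambda>i. g i \<circ> f i)"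
  by (simp add: fun_eq_iff coprod_map_def split: prod.splits)

lemma supp_coprod_nom [simp]: "supp (coprod_nom I X) (i, x) = supp (X i) x"
  unfolding supp_def supports_def by simp

lemma safe_elem_coprod_map_iff:
  "safe_elem (coprod_nom I X) (coprod_map h) (i, x) \<longleftrightarrow> i \<in> I \<and> safe_elem (X i) (h i) x"
  unfolding safe_elem_def by auto

lemma safe_map_coprod_map:
  assumes "\<forall>i\<in>I. safe_map (X i) (Y i) (h i)"
  shows "safe_map (coprod_nom I X) (coprod_nom I Y) (coprod_map h)"
  unfolding safe_map_def
proof
  fix z assume "z \<in> carrier (coprod_nom I Y)"
  then obtain i y where z: "z = (i, y)" "i \<in> I" "y \<in> carrier (Y i)" by auto
  then obtain u where "safe_elem (X i) (h i) u" "h i u = y"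
    using assms unfolding safe_map_def by blast
  then have "safe_elem (coprod_nom I X) (coprod_map h) (i, u) \<and> coprod_map h (i, u) = z"
    using z by (simp add: safe_elem_coprod_map_iff)
  then show "\<exists>u. safe_elem (coprod_nom I X) (coprod_map h) u \<and> coprod_map h u = z" ..
qed

lemma forward_safe_coprod_nom:
  assumes "\<forall>i\<in>I. forward_safe (X i) (Y i) (W i) (f i) (g i)"
  shows "forward_safe (coprod_nom I X) (coprod_nom I Y) (coprod_nom I W) (coprod_map f) (coprod_map g)"
  using assms unfolding forward_safe_def coprod_map_comp
  by (auto simp: safe_elem_coprod_map_iff intro: safe_map_coprod_map)

lemma backward_safe_coprod_nom:
  assumes "\<forall>i\<in>I. backward_safe (X i) (Y i) (W i) (f i) (g i)"
  shows "backward_safe (coprod_nom I X) (coprod_nom I Y) (coprod_nom I W) (coprod_map f) (coprod_map g)"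
  using assms unfolding backward_safe_def coprod_map_comp
  by (auto simp: safe_elem_coprod_map_iff intro: safe_map_coprod_map)

subsection \<open>Name abstraction\<close>

lemma carrier_names_nom [simp]: "carrier names_nom = UNIV"
  by (simp add: names_nom_def)

lemma act_names_nom [simp]: "act names_nom p a = p a"
  by (simp add: names_nom_def)

lemma nominal_names_nom: "nominal names_nom"
  unfolding nominal_def supports_def names_nom_def by auto

lemma names_map_eq_map_prod_id: "names_map f = map_prod id f"
  by (simp add: names_map_def fun_eq_iff)

lemma nabs_refl:
  assumes "nominal W" "w \<in> carrier W"
  shows "(b, w) \<in> nabs W b w"
proof -
  obtain c where "c \<notin> insert b (supp W w)"
    using ex_new_if_finite[OF infinite_UNIV_nat] finite_supp[OF assms] by (meson finite_insert)
  then show ?thesis using assms(2) unfolding nabs_def by blast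
qed

lemma theta_image: "theta W ` carrier (prod_nom names_nom W) = carrier (abs_nom W)"
  by (auto simp: theta_def abs_nom_def)

text \<open>If \<open>\<langle>b\<rangle>(h v) = \<langle>a\<rangle>(h x)\<close>, the permutation \<open>(a c) \<circ> (b c)\<close> given by alpha-equivalence
  maps \<open>(b, v)\<close> into the fibre of \<open>id \<times> h\<close> over \<open>(a, h x)\<close>.\<close>

lemma safe_elem_theta_comp_iff:
  assumes X: "nominal X" and W: "nominal W" and h: "equivariant X W h"
  shows "safe_elem (prod_nom names_nom X) (theta W \<circ> map_prod id h) u \<longleftrightarrow>
    safe_elem (prod_nom names_nom X) (map_prod id h) u"
proof
  assume safe: "safe_elem (prod_nom names_nom X) (map_prod id h) u"
  let ?P = "prod_nom names_nom X"
  have P: "nominal ?P" using nominal_prod_nom[OF nominal_names_nom X] .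
  obtain a x where u: "u = (a, x)" by (cases u)
  have x: "x \<in> carrier X" using safe u by (simp add: safe_elem_def)
  show "safe_elem ?P (theta W \<circ> map_prod id h) u"
    unfolding safe_elem_def
  proof (intro conjI ballI impI)
    show "u \<in> carrier ?P" using safe by (simp add: safe_elem_def)
  next
    fix w assume w: "w \<in> carrier ?P" and hw: "(theta W \<circ> map_prod id h) w = (theta W \<circ> map_prod id h) u"
    obtain b v where w_def: "w = (b, v)" by (cases w)
    have v: "v \<in> carrier X" using w w_def by simp
    have "(b, h v) \<in> nabs W a (h x)"
      using hw nabs_refl[OF W equivariantD(1)[OF h v], of b] unfolding w_def u by (simp add: theta_def)
    then obtain c where c: "act W (swp a c) (h x) = act W (swp b c) (h v)"
      unfolding nabs_def by blast
    define \<pi> where "\<pi> = swp a c \<circ> swp b c"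
    have \<pi>: "fperm \<pi>" unfolding \<pi>_def using fperm_comp fperm_swp by blast
    have "\<pi> b = a" by (simp add: \<pi>_def swp_def)
    then have \<pi>w: "act ?P \<pi> w = (a, act X \<pi> v)" by (simp add: w_def)
    have "h (act X \<pi> v) = act W (swp a c) (act W (swp b c) (h v))"
      using equivariantD(2)[OF h \<pi> v] nominal_act_comp[OF W fperm_swp fperm_swp equivariantD(1)[OF h v]]
      by (simp add: \<pi>_def)
    also have "\<dots> = h x" using nominal_act_swp_swp[OF W equivariantD(1)[OF h x], of a c] by (simp flip: c)
    finally have "map_prod id h (act ?P \<pi> w) = map_prod id h u" by (simp add: \<pi>w u)
    moreover have "act ?P \<pi> w \<in> carrier ?P" using nominal_act_closed[OF P \<pi> w] .
    ultimately have "card (supp ?P (act ?P \<pi> w)) \<le> card (supp ?P u)" using safe_elemD[OF safe] by blast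
    then show "card (supp ?P w) \<le> card (supp ?P u)" using card_supp_act[OF P \<pi> w] by simp
  qed
qed (rule safe_elem_of_comp)

lemma safe_map_postcomp:
  assumes "safe_map Y Z g" and "k ` carrier Z = carrier V"
    and "\<And>v. safe_elem Y g v \<Longrightarrow> safe_elem Y (k \<circ> g) v"
  shows "safe_map Y V (k \<circ> g)"
  using assms unfolding safe_map_def by (metis comp_apply imageE)

lemma forward_safe_postcomp:
  assumes "forward_safe X Y Z f g" and "k ` carrier Z = carrier V"
    and "\<And>u. safe_elem X (k \<circ> (g \<circ> f)) u \<longleftrightarrow> safe_elem X (g \<circ> f) u"
    and "\<And>v. safe_elem Y (k \<circ> g) v \<longleftrightarrow> safe_elem Y g v"
  shows "forward_safe X Y V f (k \<circ> g)"
  using assms safe_map_postcomp[of Y Z g k V] unfolding forward_safe_def o_assoc[symmetric] by blast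

lemma backward_safe_postcomp:
  assumes "backward_safe X Y Z f g" and "k ` carrier Z = carrier V"
    and "\<And>u. safe_elem X (k \<circ> (g \<circ> f)) u \<longleftrightarrow> safe_elem X (g \<circ> f) u"
    and "\<And>v. safe_elem Y (k \<circ> g) v \<longleftrightarrow> safe_elem Y g v"
  shows "backward_safe X Y V f (k \<circ> g)"
  using assms safe_map_postcomp[of Y Z g k V] unfolding backward_safe_def o_assoc[symmetric] by blast

lemma forward_safe_abs_nom:
  assumes X: "nominal X" and Y: "nominal Y" and W: "nominal W"
    and f: "equivariant X Y f" and g: "equivariant Y W g" and fs: "forward_safe X Y W f g"
  shows "forward_safe (prod_nom names_nom X) (prod_nom names_nom Y) (abs_nom W)
    (names_map f) (theta W \<circ> names_map g)"
  unfolding names_map_eq_map_prod_id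
proof (rule forward_safe_postcomp[OF _ theta_image])
  show "forward_safe (prod_nom names_nom X) (prod_nom names_nom Y) (prod_nom names_nom W)
    (map_prod id f) (map_prod id g)"
    using forward_safe_prod_nom[OF nominal_names_nom nominal_names_nom nominal_names_nom X Y W
        equivariant_id equivariant_id f g forward_safe_id fs] .
qed (simp_all add: map_prod.comp safe_elem_theta_comp_iff[OF X W equivariant_comp[OF f g]]
      safe_elem_theta_comp_iff[OF Y W g])

lemma backward_safe_abs_nom:
  assumes X: "nominal X" and Y: "nominal Y" and W: "nominal W"
    and f: "equivariant X Y f" and g: "equivariant Y W g" and bs: "backward_safe X Y W f g"
  shows "backward_safe (prod_nom names_nom X) (prod_nom names_nom Y) (abs_nom W)
    (names_map f) (theta W \<circ> names_map g)"
  unfolding names_map_eq_map_prod_id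
proof (rule backward_safe_postcomp[OF _ theta_image])
  show "backward_safe (prod_nom names_nom X) (prod_nom names_nom Y) (prod_nom names_nom W)
    (map_prod id f) (map_prod id g)"
    using backward_safe_prod_nom[OF nominal_names_nom nominal_names_nom nominal_names_nom X Y W
        equivariant_id equivariant_id f g backward_safe_id bs] .
qed (simp_all add: map_prod.comp safe_elem_theta_comp_iff[OF X W equivariant_comp[OF f g]]
      safe_elem_theta_comp_iff[OF Y W g])

theorem lemma5p42:
  shows
  \<comment> \<open>(1) products\<close>
  "(nominal X1 \<and> nominal Y1 \<and> nominal W1 \<and> nominal X2 \<and> nominal Y2 \<and> nominal W2 \<and>
    equivariant X1 Y1 f1 \<and> equivariant Y1 W1 g1 \<and>
    equivariant X2 Y2 f2 \<and> equivariant Y2 W2 g2 \<longrightarrow>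
      (forward_safe X1 Y1 W1 f1 g1 \<and> forward_safe X2 Y2 W2 f2 g2 \<longrightarrow>
         forward_safe (prod_nom X1 X2) (prod_nom Y1 Y2) (prod_nom W1 W2)
           (map_prod f1 f2) (map_prod g1 g2)) \<and>
      (backward_safe X1 Y1 W1 f1 g1 \<and> backward_safe X2 Y2 W2 f2 g2 \<longrightarrow>
         backward_safe (prod_nom X1 X2) (prod_nom Y1 Y2) (prod_nom W1 W2)
           (map_prod f1 f2) (map_prod g1 g2)))
   \<and>
  \<comment> \<open>(2) coproducts over an index set I\<close>
   ((\<forall>i\<in>I. nominal (X i) \<and> nominal (Y i) \<and> nominal (W i) \<and>
            equivariant (X i) (Y i) (f i) \<and> equivariant (Y i) (W i) (g i)) \<longrightarrow>
      ((\<forall>i\<in>I. forward_safe (X i) (Y i) (W i) (f i) (g i)) \<longrightarrow>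
         forward_safe (coprod_nom I X) (coprod_nom I Y) (coprod_nom I W)
           (coprod_map f) (coprod_map g)) \<and>
      ((\<forall>i\<in>I. backward_safe (X i) (Y i) (W i) (f i) (g i)) \<longrightarrow>
         backward_safe (coprod_nom I X) (coprod_nom I Y) (coprod_nom I W)
           (coprod_map f) (coprod_map g)))
   \<and>
  \<comment> \<open>(3) V x f and theta_W o (V x g)\<close>
   (nominal X' \<and> nominal Y' \<and> nominal W' \<and>
    equivariant X' Y' f' \<and> equivariant Y' W' g' \<longrightarrow>
      (forward_safe X' Y' W' f' g' \<longrightarrow>
         forward_safe (prod_nom names_nom X') (prod_nom names_nom Y') (abs_nom W')
           (names_map f') (theta W' \<circ> names_map g')) \<and>
      (backward_safe X' Y' W' f' g' \<longrightarrow>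
         backward_safe (prod_nom names_nom X') (prod_nom names_nom Y') (abs_nom W')
           (names_map f') (theta W' \<circ> names_map g')))"
  by (intro conjI impI; (elim conjE)?)
    (simp_all add: forward_safe_prod_nom backward_safe_prod_nom forward_safe_coprod_nom
      backward_safe_coprod_nom forward_safe_abs_nom backward_safe_abs_nom)

end
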